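(* Let $p$ be an odd prime. Let $M_p$ be the number of solutions $(x,y,z)\in\mathbb{F}_p^3$ of $$z^2=(x^2y^2+1)(x^2+y^2),$$ and let $N_p$ be the number of solutions $(x,y)\in\mathbb{F}_p^2$ of $y^2=x^3-x$. Then $$M_p=(p+1)^2+(N_p-p)^2+1=\begin{cases}(p+1)^2+J(k)^2+1 & \text{if } p=4k+1,\\ (p+1)^2+1 & \text{if } p=4k+3,\end{cases}$$ where for $p=4k+1$, $J(k)=\sum_{i=1}^{4k-2}\big(\frac{i(i+1)(i+2)}{p}\big)$.
   Context: $\big(\frac{a}{p}\big)$ is the Legendre symbol. *)

theory Defs
  imports "HOL-Number_Theory.Number_Theory"
begin

text \<open>Points of F_p are represented by residues 0..p-1 (as integers); equations are read mod p.\<close>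

definition M_count :: "nat \<Rightarrow> nat" where
  "M_count p = card {(x, y, z). x \<in> {0..<int p} \<and> y \<in> {0..<int p} \<and> z \<in> {0..<int p} \<and>
      [z^2 = (x^2 * y^2 + 1) * (x^2 + y^2)] (mod int p)}"

definition N_count :: "nat \<Rightarrow> nat" where
  "N_count p = card {(x, y). x \<in> {0..<int p} \<and> y \<in> {0..<int p} \<and>
      [y^2 = x^3 - x] (mod int p)}"

definition J :: "nat \<Rightarrow> int" where
  "J k = (\<Sum>i = 1..4*k-2. Legendre (int i * (int i + 1) * (int i + 2)) (int (4*k+1)))"

end

theory Submission
  imports Defs
begin

text \<open>
  Write \<chi> for the Legendre symbol mod p. As z^2 = c has 1 + \<chi> c solutions, M_p is p^2 plus
  the sum S of \<chi> (f x y) over all x, y, where f x y = (x^2 y^2 + 1)(x^2 + y^2), and N_p = p + a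
  with a = \<Sum>x. \<chi> (x^3 - x). The axes contribute 2(p - 1) to S. Off the axes, substituting x = yw
  gives f (yw) y = y^2 (w^2 y^4 + 1)(w^2 + 1); summing over v = y^2 with weight 1 + \<chi> v and
  rescaling u = wv turns the sum over y into -2 + \<chi> w * b, where b = \<Sum>x. \<chi> (x^3 + x), using the
  classical evaluation of \<Sum> \<chi> (u^2 + 1) over u \<noteq> 0 as -2. Hence S = 2p + 2 + b^2, so
  M_p = (p + 1)^2 + 1 + b^2, and it remains to show a^2 = b^2. The substitution x \<mapsto> dx shows that
  replacing c by d^2 c multiplies \<Sum>x. \<chi> (x^3 + cx) by \<chi> d: for p = 1 mod 4 take d^2 = -1, and
  for p = 3 mod 4 take d = -1, which forces a = b = 0.
\<close>

section \<open>Legendre symbol modulo an odd prime\<close>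

lemma Legendre_cong:
  assumes "[a = b] (mod m)"
  shows "Legendre a m = Legendre b m"
proof -
  have "[a = 0] (mod m) \<longleftrightarrow> [b = 0] (mod m)" and "QuadRes m a \<longleftrightarrow> QuadRes m b"
    using assms cong_sym cong_trans unfolding QuadRes_def by meson+
  then show ?thesis
    unfolding Legendre_def by simp
qed

lemma Legendre_eq_0_iff: "Legendre a m = 0 \<longleftrightarrow> m dvd a"
  by (simp add: Legendre_def cong_0_iff)

lemma Legendre_values: "Legendre a m \<in> {-1, 0, 1}"
  by (simp add: Legendre_def)

locale odd_prime =
  fixes p :: nat
  assumes prime: "prime p" and odd: "odd p"
begin

abbreviation \<chi> :: "int \<Rightarrow> int" where "\<chi> a \<equiv> Legendre a (int p)"
abbreviation R :: "int set" where "R \<equiv> {0..<int p}"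
abbreviation U :: "int set" where "U \<equiv> {1..<int p}"

lemma p_gt_2: "2 < p"
  using prime odd prime_ge_2_nat[OF prime] by (cases "p = 2") auto

lemma prime_int: "prime (int p)"
  using prime by simp

lemma coprime_iff_not_dvd: "coprime a (int p) \<longleftrightarrow> \<not> int p dvd a"
  using prime_int by (metis coprime_commute prime_imp_coprime coprime_absorb_left not_prime_unit)

lemma units_not_dvd: "x \<in> U \<Longrightarrow> \<not> int p dvd x"
  by (auto simp: zdvd_not_zless)

lemma Legendre_eqI:
  assumes "[\<chi> a = c] (mod int p)" and "c \<in> {-1, 0, 1}"
  shows "\<chi> a = c"
proof -
  have "int p dvd \<chi> a - c"
    using assms(1) by (simp add: cong_iff_dvd_diff)
  moreover have "\<bar>\<chi> a - c\<bar> < int p"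
    using Legendre_values[of a "int p"] assms(2) p_gt_2 by auto
  ultimately show ?thesis
    using dvd_imp_le_int[of "\<chi> a - c" "int p"] by fastforce
qed

lemma Legendre_mult: "\<chi> (a * b) = \<chi> a * \<chi> b"
proof (rule Legendre_eqI)
  have "[\<chi> (a * b) = a ^ ((p - 1) div 2) * b ^ ((p - 1) div 2)] (mod int p)"
    using euler_criterion[OF prime p_gt_2, of "a * b"] by (simp add: power_mult_distrib)
  also have "[a ^ ((p - 1) div 2) * b ^ ((p - 1) div 2) = \<chi> a * \<chi> b] (mod int p)"
    using euler_criterion[OF prime p_gt_2] by (intro cong_mult) (auto simp: cong_sym)
  finally show "[\<chi> (a * b) = \<chi> a * \<chi> b] (mod int p)" .
  show "\<chi> a * \<chi> b \<in> {-1, 0, 1}"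
    using Legendre_values[of a "int p"] Legendre_values[of b "int p"] by auto
qed

lemma Legendre_minus_one: "\<chi> (-1) = (-1) ^ ((p - 1) div 2)"
  by (rule Legendre_eqI[OF euler_criterion[OF prime p_gt_2]]) (simp add: minus_one_power_iff)

lemma Legendre_square: "\<not> int p dvd a \<Longrightarrow> \<chi> (a^2) = 1"
  using prime_int by (auto simp: Legendre_def QuadRes_def cong_0_iff prime_dvd_power_iff intro: cong_refl)

lemma Legendre_mult_self: "\<not> int p dvd a \<Longrightarrow> \<chi> a * \<chi> a = 1"
  using Legendre_square by (simp add: Legendre_mult power2_eq_square)

lemma Legendre_minus_one_if_3_mod_4: "p mod 4 = 3 \<Longrightarrow> \<chi> (-1) = -1"
proof -
  assume "p mod 4 = 3"
  then have "odd ((p - 1) div 2)"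
    by presburger
  then show ?thesis
    by (simp add: Legendre_minus_one)
qed

lemma cong_square_iff:
  "[z^2 = y^2] (mod int p) \<longleftrightarrow> [z = y] (mod int p) \<or> [z = -y] (mod int p)"
proof -
  have "z^2 - y^2 = (z - y) * (z + y)"
    by (simp add: power2_eq_square algebra_simps)
  then show ?thesis
    using prime_dvd_mult_iff[OF prime_int] by (simp add: cong_iff_dvd_diff)
qed

lemma cong_minus_self_iff: "[y = -y] (mod int p) \<longleftrightarrow> int p dvd y"
proof -
  have "\<not> int p dvd 2"
    using p_gt_2 by (auto dest: zdvd_imp_le)
  then show ?thesis
    using prime_dvd_mult_iff[OF prime_int, of 2 y] by (simp add: cong_iff_dvd_diff)
qed

lemma residues_cong_eq: "{z \<in> R. [z = y] (mod int p)} = {y mod int p}"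
  using p_gt_2 by (auto simp: cong_def)

lemma card_square_roots: "int (card {z \<in> R. [z^2 = c] (mod int p)}) = 1 + \<chi> c"
proof (cases "QuadRes (int p) c")
  case True
  then obtain y where y: "[y^2 = c] (mod int p)"
    unfolding QuadRes_def by blast
  then have "{z \<in> R. [z^2 = c] (mod int p)} = {z \<in> R. [z^2 = y^2] (mod int p)}"
    using cong_sym cong_trans by blast
  also have "\<dots> = {y mod int p, (-y) mod int p}"
    using residues_cong_eq[of y] residues_cong_eq[of "-y"] by (auto simp: cong_square_iff)
  finally have roots: "{z \<in> R. [z^2 = c] (mod int p)} = {y mod int p, (-y) mod int p}" .
  have "[c = 0] (mod int p) \<longleftrightarrow> [y^2 = 0] (mod int p)"
    using y cong_sym cong_trans by blast
  then have "[c = 0] (mod int p) \<longleftrightarrow> int p dvd y"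
    using prime_dvd_power_iff[OF prime_int, of 2 y] by (simp add: cong_0_iff)
  moreover have "y mod int p = (-y) mod int p \<longleftrightarrow> int p dvd y"
    using cong_minus_self_iff[of y] by (simp add: cong_def)
  ultimately show ?thesis
    using True roots by (auto simp: Legendre_def)
next
  case False
  moreover have "\<not> [c = 0] (mod int p)"
    using False unfolding QuadRes_def by (metis cong_sym zero_power2)
  ultimately have "\<chi> c = -1"
    by (simp add: Legendre_def)
  moreover have "{z \<in> R. [z^2 = c] (mod int p)} = {}"
    using False unfolding QuadRes_def by blast
  ultimately show ?thesis
    by (simp only:) simp
qed

lemma residues_eq_insert_units: "R = insert 0 U"
  using p_gt_2 by auto

lemma sum_residues_split: "(\<Sum>x\<in>R. F x) = F 0 + (\<Sum>x\<in>U. F x)"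
  by (simp add: residues_eq_insert_units)

lemma sum_reindex_cong:
  assumes "bij_betw h A A" and "\<And>x. x \<in> A \<Longrightarrow> [h x = g x] (mod int p)"
    and "\<And>x y. [x = y] (mod int p) \<Longrightarrow> F x = F y"
  shows "(\<Sum>x\<in>A. F (g x)) = (\<Sum>x\<in>A. F x)"
proof -
  have "(\<Sum>x\<in>A. F (g x)) = (\<Sum>x\<in>A. F (h x))"
    using assms(2,3) by (metis sum.cong)
  also have "\<dots> = (\<Sum>x\<in>A. F x)"
    by (rule sum.reindex_bij_betw[OF assms(1)])
  finally show ?thesis .
qed

lemma bij_betw_units_mult:
  assumes "\<not> int p dvd a"
  shows "bij_betw (\<lambda>x. a * x mod int p) U U"
  using assms by (simp add: coprime_iff_not_dvd bij_betw_int_remainders_mult)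

lemma bij_betw_residues_mult:
  assumes "\<not> int p dvd a"
  shows "bij_betw (\<lambda>x. a * x mod int p) R R"
  using bij_betw_units_mult[OF assms] by (simp add: residues_eq_insert_units bij_betw_def)

lemma bij_betw_residues_succ: "bij_betw (\<lambda>x. (x + 1) mod int p) R R"
  by (rule bij_betwI[where g = "\<lambda>x. (x - 1) mod int p"]) (auto simp: mod_simps)

lemma bij_betw_units_inverse: "bij_betw (modular_inverse (int p)) U U"
proof -
  have inv: "modular_inverse (int p) x \<in> U" "modular_inverse (int p) (modular_inverse (int p) x) = x"
    if "x \<in> U" for x
  proof -
    have "coprime x (int p)"
      using that by (simp add: coprime_iff_not_dvd units_not_dvd)
    then show "modular_inverse (int p) x \<in> U"
      using p_gt_2 modular_inverse_int_less[of "int p" x] mult_modular_inverse_int_pos[of "int p" x]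
      by simp
    show "modular_inverse (int p) (modular_inverse (int p) x) = x"
      using that \<open>coprime x (int p)\<close>
      by (intro modular_inverse_int_eqI) (auto intro: cong_modular_inverse2)
  qed
  then show ?thesis
    by (intro bij_betwI[where g = "modular_inverse (int p)"]) auto
qed

section \<open>Character sums\<close>

lemma sum_residues_squares:
  assumes "\<And>x y. [x = y] (mod int p) \<Longrightarrow> H x = H y"
  shows "(\<Sum>y\<in>R. H (y^2)) = (\<Sum>v\<in>R. (1 + \<chi> v) * H v)"
proof -
  have fibre: "(\<Sum>y\<in>{y \<in> R. y^2 mod int p = v}. H (y^2 mod int p)) =
      int (card {y \<in> R. [y^2 = v] (mod int p)}) * H v" if "v \<in> R" for v
  proof -
    have "{y \<in> R. y^2 mod int p = v} = {y \<in> R. [y^2 = v] (mod int p)}"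
      using that by (auto simp: cong_def)
    moreover have "(\<Sum>y\<in>{y \<in> R. y^2 mod int p = v}. H (y^2 mod int p)) =
        (\<Sum>y\<in>{y \<in> R. y^2 mod int p = v}. H v)"
      by (rule sum.cong) auto
    ultimately show ?thesis
      by simp
  qed
  have "(\<Sum>y\<in>R. H (y^2)) = (\<Sum>y\<in>R. H (y^2 mod int p))"
    by (intro sum.cong refl assms) (simp add: cong_def)
  also have "\<dots> = (\<Sum>v\<in>R. \<Sum>y\<in>{y \<in> R. y^2 mod int p = v}. H (y^2 mod int p))"
    by (rule sum.group[symmetric]) (use p_gt_2 in auto)
  also have "\<dots> = (\<Sum>v\<in>R. int (card {y \<in> R. [y^2 = v] (mod int p)}) * H v)"
    by (rule sum.cong[OF refl fibre])
  also have "\<dots> = (\<Sum>v\<in>R. (1 + \<chi> v) * H v)"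
    by (simp only: card_square_roots)
  finally show ?thesis .
qed

lemma sum_units_squares:
  assumes "\<And>x y. [x = y] (mod int p) \<Longrightarrow> H x = H y"
  shows "(\<Sum>y\<in>U. H (y^2)) = (\<Sum>v\<in>U. (1 + \<chi> v) * H v)"
  using sum_residues_squares[of H, OF assms] by (simp add: sum_residues_split Legendre_def)

lemma sum_Legendre_residues: "(\<Sum>a\<in>R. \<chi> a) = 0"
  using sum_residues_squares[of "\<lambda>_. 1"] by (simp add: sum.distrib)

lemma sum_Legendre_units_succ: "(\<Sum>a\<in>U. \<chi> (a + 1)) = -1"
proof -
  have "(\<Sum>a\<in>R. \<chi> (a + 1)) = 0"
    using sum_reindex_cong[OF bij_betw_residues_succ, of "\<lambda>x. x + 1" \<chi>] sum_Legendre_residues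
    by (simp add: Legendre_cong)
  moreover have "\<chi> 1 = 1"
    using Legendre_square[of 1] p_gt_2 by (simp add: zdvd_not_zless)
  ultimately show ?thesis
    by (simp add: sum_residues_split)
qed

lemma sum_Legendre_units_square_succ: "(\<Sum>u\<in>U. \<chi> (u^2 + 1)) = -2"
proof -
  have "(\<Sum>u\<in>U. \<chi> (u^2 + 1)) = (\<Sum>v\<in>U. (1 + \<chi> v) * \<chi> (v + 1))"
    by (rule sum_units_squares) (auto intro!: Legendre_cong cong_add)
  also have "\<dots> = (\<Sum>v\<in>U. \<chi> (v + 1)) + (\<Sum>v\<in>U. \<chi> v * \<chi> (v + 1))"
    by (simp add: sum.distrib algebra_simps)
  also have "(\<Sum>v\<in>U. \<chi> v * \<chi> (v + 1)) = (\<Sum>v\<in>U. \<chi> (modular_inverse (int p) v + 1))"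
  proof (rule sum.cong[OF refl])
    fix v assume v: "v \<in> U"
    define v' where "v' = modular_inverse (int p) v"
    have inverse: "[v * v' = 1] (mod int p)"
      unfolding v'_def using v by (simp add: cong_modular_inverse1 coprime_iff_not_dvd units_not_dvd)
    have "[v^2 * (v' + 1) = v * (v + 1)] (mod int p)"
      using cong_add[OF cong_mult[OF cong_refl[of v] inverse] cong_refl[of "v^2"]]
      by (simp add: power2_eq_square algebra_simps)
    then have "\<chi> (v * (v + 1)) = \<chi> (v^2) * \<chi> (v' + 1)"
      by (metis Legendre_cong Legendre_mult)
    then show "\<chi> v * \<chi> (v + 1) = \<chi> (v' + 1)"
      using Legendre_square[OF units_not_dvd[OF v]] by (simp add: Legendre_mult)
  qed
  also have "\<dots> = (\<Sum>v\<in>U. \<chi> (v + 1))"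
    by (rule sum_reindex_cong[OF bij_betw_units_inverse]) (auto intro!: Legendre_cong cong_add)
  finally show ?thesis
    using sum_Legendre_units_succ by simp
qed

definition cubic_sum :: "int \<Rightarrow> int" where
  "cubic_sum c = (\<Sum>x\<in>R. \<chi> (x^3 + c * x))"

lemma cubic_sum_cong: "[c = c'] (mod int p) \<Longrightarrow> cubic_sum c = cubic_sum c'"
  unfolding cubic_sum_def by (intro sum.cong refl Legendre_cong cong_add cong_mult cong_refl)

lemma cubic_sum_units: "cubic_sum c = (\<Sum>u\<in>U. \<chi> u * \<chi> (u^2 + c))"
proof -
  have "\<chi> (u^3 + c * u) = \<chi> u * \<chi> (u^2 + c)" for u
    using Legendre_mult[of u "u^2 + c"] by (simp add: power2_eq_square power3_eq_cube algebra_simps)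
  then show ?thesis
    by (simp add: cubic_sum_def sum_residues_split Legendre_eq_0_iff)
qed

lemma cubic_sum_scale:
  assumes "\<not> int p dvd d"
  shows "cubic_sum (d^2 * c) = \<chi> d * cubic_sum c"
proof -
  have "cubic_sum (d^2 * c) = (\<Sum>x\<in>R. \<chi> ((d * x)^3 + d^2 * c * (d * x)))"
    unfolding cubic_sum_def
    by (rule sum_reindex_cong[OF bij_betw_residues_mult[OF assms], symmetric])
      (auto intro!: Legendre_cong cong_add cong_mult cong_pow)
  also have "\<dots> = (\<Sum>x\<in>R. \<chi> d * \<chi> (x^3 + c * x))"
  proof (rule sum.cong[OF refl])
    fix x
    have "(d * x)^3 + d^2 * c * (d * x) = d^2 * (d * (x^3 + c * x))"
      by (simp add: power2_eq_square power3_eq_cube algebra_simps)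
    then show "\<chi> ((d * x)^3 + d^2 * c * (d * x)) = \<chi> d * \<chi> (x^3 + c * x)"
      by (simp add: Legendre_mult Legendre_square[OF assms])
  qed
  finally show ?thesis
    by (simp add: cubic_sum_def sum_distrib_left)
qed

lemma cubic_sum_eq_0: "\<chi> (-1) = -1 \<Longrightarrow> cubic_sum c = 0"
  using cubic_sum_scale[of "-1" c] p_gt_2 by (simp add: zdvd_not_zless)

lemma cubic_sum_minus_one_square: "(cubic_sum (-1))^2 = (cubic_sum 1)^2"
proof -
  have "\<not> [-1 = 0] (mod int p)"
    using p_gt_2 by (simp add: cong_0_iff zdvd_not_zless)
  then consider "QuadRes (int p) (-1)" | "\<chi> (-1) = -1"
    unfolding Legendre_def by argo
  then show ?thesis
  proof cases
    case 1
    then obtain i where i: "[i^2 = -1] (mod int p)"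
      unfolding QuadRes_def by blast
    have "\<not> int p dvd i"
      using i \<open>\<not> [-1 = 0] (mod int p)\<close> prime_dvd_power_iff[OF prime_int, of 2 i]
      by (metis cong_0_iff cong_trans cong_sym zero_less_numeral)
    have "cubic_sum (-1) = cubic_sum (i^2 * 1)"
      using i by (simp add: cubic_sum_cong cong_sym)
    also have "\<dots> = \<chi> i * cubic_sum 1"
      by (rule cubic_sum_scale[OF \<open>\<not> int p dvd i\<close>])
    finally show ?thesis
      using Legendre_mult_self[OF \<open>\<not> int p dvd i\<close>] by (simp add: power2_eq_square algebra_simps)
  next
    case 2
    then show ?thesis
      by (simp add: cubic_sum_eq_0)
  qed
qed

lemma sum_units_quartic_succ:
  assumes w: "w \<in> U"
  shows "(\<Sum>y\<in>U. \<chi> (w^2 * y^4 + 1)) = -2 + \<chi> w * cubic_sum 1"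
proof -
  define G where "G u = (1 + \<chi> w * \<chi> u) * \<chi> (u^2 + 1)" for u
  have "(\<Sum>y\<in>U. \<chi> (w^2 * y^4 + 1)) = (\<Sum>y\<in>U. \<chi> (w^2 * (y^2)^2 + 1))"
    by (simp flip: power_mult)
  also have "\<dots> = (\<Sum>v\<in>U. (1 + \<chi> v) * \<chi> (w^2 * v^2 + 1))"
    by (rule sum_units_squares) (auto intro!: Legendre_cong cong_add cong_mult cong_pow)
  also have "\<dots> = (\<Sum>v\<in>U. G (w * v))"
  proof (rule sum.cong[OF refl])
    fix v
    have "\<chi> w * \<chi> (w * v) = \<chi> v"
      using Legendre_mult_self[OF units_not_dvd[OF w]] by (simp add: Legendre_mult algebra_simps)
    then show "(1 + \<chi> v) * \<chi> (w^2 * v^2 + 1) = G (w * v)"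
      by (simp add: G_def power_mult_distrib)
  qed
  also have "\<dots> = (\<Sum>u\<in>U. G u)"
    unfolding G_def
    by (rule sum_reindex_cong[OF bij_betw_units_mult[OF units_not_dvd[OF w]]])
      (auto intro!: arg_cong2[where f = "(*)"] Legendre_cong cong_add cong_pow)
  also have "\<dots> = (\<Sum>u\<in>U. \<chi> (u^2 + 1)) + \<chi> w * (\<Sum>u\<in>U. \<chi> u * \<chi> (u^2 + 1))"
    by (simp add: G_def sum.distrib sum_distrib_left algebra_simps)
  finally show ?thesis
    by (simp add: sum_Legendre_units_square_succ cubic_sum_units)
qed

lemma sum_units_surface_row:
  assumes y: "y \<in> U"
  shows "(\<Sum>x\<in>U. \<chi> ((x^2 * y^2 + 1) * (x^2 + y^2))) =
    (\<Sum>w\<in>U. \<chi> (w^2 * y^4 + 1) * \<chi> (w^2 + 1))"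
proof -
  have "(\<Sum>x\<in>U. \<chi> ((x^2 * y^2 + 1) * (x^2 + y^2))) =
      (\<Sum>w\<in>U. \<chi> (((y * w)^2 * y^2 + 1) * ((y * w)^2 + y^2)))"
    by (rule sum_reindex_cong[OF bij_betw_units_mult[OF units_not_dvd[OF y]], symmetric])
      (auto intro!: Legendre_cong cong_add cong_mult cong_pow)
  also have "\<dots> = (\<Sum>w\<in>U. \<chi> (w^2 * y^4 + 1) * \<chi> (w^2 + 1))"
  proof (rule sum.cong[OF refl])
    fix w
    have "((y * w)^2 * y^2 + 1) * ((y * w)^2 + y^2) = y^2 * ((w^2 * y^4 + 1) * (w^2 + 1))"
      by (simp add: power2_eq_square power4_eq_xxxx algebra_simps)
    then show "\<chi> (((y * w)^2 * y^2 + 1) * ((y * w)^2 + y^2)) = \<chi> (w^2 * y^4 + 1) * \<chi> (w^2 + 1)"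
      by (simp add: Legendre_mult Legendre_square[OF units_not_dvd[OF y]])
  qed
  finally show ?thesis .
qed

lemma sum_units_surface:
  "(\<Sum>x\<in>U. \<Sum>y\<in>U. \<chi> ((x^2 * y^2 + 1) * (x^2 + y^2))) = 4 + (cubic_sum 1)^2"
proof -
  have "(\<Sum>x\<in>U. \<Sum>y\<in>U. \<chi> ((x^2 * y^2 + 1) * (x^2 + y^2))) =
      (\<Sum>y\<in>U. \<Sum>w\<in>U. \<chi> (w^2 * y^4 + 1) * \<chi> (w^2 + 1))"
    by (subst sum.swap) (simp add: sum_units_surface_row)
  also have "\<dots> = (\<Sum>w\<in>U. \<chi> (w^2 + 1) * (\<Sum>y\<in>U. \<chi> (w^2 * y^4 + 1)))"
    by (subst sum.swap) (simp add: sum_distrib_left mult.commute)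
  also have "\<dots> = (\<Sum>w\<in>U. -2 * \<chi> (w^2 + 1) + cubic_sum 1 * (\<chi> w * \<chi> (w^2 + 1)))"
    by (intro sum.cong refl) (simp only: sum_units_quartic_succ, simp add: algebra_simps)
  also have "\<dots> = -2 * (\<Sum>w\<in>U. \<chi> (w^2 + 1)) +
      cubic_sum 1 * (\<Sum>w\<in>U. \<chi> w * \<chi> (w^2 + 1))"
    by (simp add: sum.distrib sum_subtractf sum_negf sum_distrib_left)
  also have "\<dots> = 4 + (cubic_sum 1)^2"
    using sum_Legendre_units_square_succ cubic_sum_units[of 1] by (simp add: power2_eq_square)
  finally show ?thesis .
qed

lemma sum_residues_surface:
  "(\<Sum>x\<in>R. \<Sum>y\<in>R. \<chi> ((x^2 * y^2 + 1) * (x^2 + y^2))) = 2 * int p + 2 + (cubic_sum 1)^2"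
proof -
  have "(\<Sum>y\<in>U. \<chi> (y^2)) = int p - 1"
    using p_gt_2 by (simp add: Legendre_square units_not_dvd)
  then show ?thesis
    by (simp add: sum_residues_split sum.distrib sum_units_surface Legendre_eq_0_iff)
qed

section \<open>Point counts\<close>

lemma card_square_fibres:
  assumes "finite A"
  shows "int (card (SIGMA a:A. {z \<in> R. [z^2 = g a] (mod int p)})) = (\<Sum>a\<in>A. 1 + \<chi> (g a))"
proof -
  have "card (SIGMA a:A. {z \<in> R. [z^2 = g a] (mod int p)}) =
      (\<Sum>a\<in>A. card {z \<in> R. [z^2 = g a] (mod int p)})"
    using assms by (intro card_SigmaI) (auto intro: finite_subset[of _ R])
  then show ?thesis
    by (simp only: of_nat_sum card_square_roots)
qed

lemma N_count_eq: "int (N_count p) = int p + cubic_sum (-1)"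
proof -
  have "N_count p = card (SIGMA x:R. {y \<in> R. [y^2 = x^3 - x] (mod int p)})"
    unfolding N_count_def by (rule arg_cong[where f = card]) auto
  then have "int (N_count p) = (\<Sum>x\<in>R. 1 + \<chi> (x^3 - x))"
    by (simp only: card_square_fibres finite_atLeastLessThan_int)
  then show ?thesis
    by (simp add: cubic_sum_def sum.distrib)
qed

lemma M_count_eq: "int (M_count p) = (int p + 1)^2 + 1 + (cubic_sum 1)^2"
proof -
  let ?f = "\<lambda>x y. (x^2 * y^2 + 1) * (x^2 + y^2)"
  have "M_count p = card (SIGMA x:R. SIGMA y:R. {z \<in> R. [z^2 = ?f x y] (mod int p)})"
    unfolding M_count_def by (rule arg_cong[where f = card]) auto
  also have "\<dots> = (\<Sum>x\<in>R. card (SIGMA y:R. {z \<in> R. [z^2 = ?f x y] (mod int p)}))"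
    by (intro card_SigmaI ballI finite_SigmaI) (auto intro: finite_subset[of _ R])
  finally have "int (M_count p) = (\<Sum>x\<in>R. \<Sum>y\<in>R. 1 + \<chi> (?f x y))"
    by (simp only: of_nat_sum card_square_fibres finite_atLeastLessThan_int)
  also have "\<dots> = (int p)^2 + (2 * int p + 2 + (cubic_sum 1)^2)"
    using sum_residues_surface by (simp add: sum.distrib power2_eq_square)
  finally show ?thesis
    by (simp add: power2_eq_square algebra_simps)
qed

lemma J_eq_cubic_sum:
  assumes "p = 4 * k + 1"
  shows "J k = cubic_sum (-1)"
proof -
  have "J k = (\<Sum>i\<in>int ` {1..4*k-2}. \<chi> (i * (i + 1) * (i + 2)))"
    unfolding J_def assms[symmetric] by (subst sum.reindex) (auto simp: inj_on_def)
  also have "int ` {1..4*k-2} = {1..int p - 3}"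
    using assms p_gt_2 by (simp add: image_int_atLeastAtMost)
  also have "(\<Sum>i\<in>{1..int p - 3}. \<chi> (i * (i + 1) * (i + 2))) =
      (\<Sum>x\<in>{2..int p - 2}. \<chi> (x^3 - x))"
    by (rule sum.reindex_bij_witness[where i = "\<lambda>x. x - 1" and j = "\<lambda>i. i + 1"])
      (auto simp: algebra_simps power3_eq_cube)
  also have "\<dots> = (\<Sum>x\<in>R. \<chi> (x^3 - x))"
  proof (rule sum.mono_neutral_left)
    show "\<forall>x\<in>R - {2..int p - 2}. \<chi> (x^3 - x) = 0"
    proof
      fix x assume "x \<in> R - {2..int p - 2}"
      then have "x = 0 \<or> x = 1 \<or> x + 1 = int p"
        by auto
      moreover have "x^3 - x = (x - 1) * x * (x + 1)"
        by (simp add: algebra_simps power3_eq_cube)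
      ultimately show "\<chi> (x^3 - x) = 0"
        by (auto simp: Legendre_eq_0_iff)
    qed
  qed auto
  finally show ?thesis
    by (simp add: cubic_sum_def)
qed

end

theorem theorem4p5:
  fixes p :: nat
  assumes "prime p" and "odd p"
  shows "int (M_count p) = (int p + 1)^2 + (int (N_count p) - int p)^2 + 1 \<and>
         (\<forall>k. p = 4*k+1 \<longrightarrow> int (M_count p) = (int p + 1)^2 + (J k)^2 + 1) \<and>
         (\<forall>k. p = 4*k+3 \<longrightarrow> int (M_count p) = (int p + 1)^2 + 1)"
proof -
  interpret odd_prime p
    using assms by unfold_locales
  have M: "int (M_count p) = (int p + 1)^2 + (cubic_sum (-1))^2 + 1"
    using M_count_eq cubic_sum_minus_one_square by simp
  show ?thesis
  proof (intro conjI allI impI)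
    show "int (M_count p) = (int p + 1)^2 + (int (N_count p) - int p)^2 + 1"
      using M N_count_eq by simp
  next
    fix k assume "p = 4*k+1"
    then show "int (M_count p) = (int p + 1)^2 + (J k)^2 + 1"
      using M J_eq_cubic_sum by simp
  next
    fix k assume "p = 4*k+3"
    then have "p mod 4 = 3"
      by simp
    then have "cubic_sum (-1) = 0"
      by (intro cubic_sum_eq_0 Legendre_minus_one_if_3_mod_4)
    then show "int (M_count p) = (int p + 1)^2 + 1"
      using M by simp
  qed
qed

end
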